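(* Let $x_1,\dots,x_N\in\mathbb{R}^q$ and let $d:\mathbb{R}^q\times\mathbb{R}^q\to\mathbb{R}_{\ge0}$ be any function such that for every subset $J\subseteq\{1,\dots,N\}$ the function $x\mapsto\sum_{i\in J}d(x,x_i)$ attains its minimum on $\mathbb{R}^q$ (for $J=\emptyset$ this is the zero function). Let $\mu$ be a choice function assigning to each subset $J\subseteq\{1,\dots,N\}$ a fixed point $\mu(J)\in\operatorname{argmin}_{x}\sum_{i\in J}d(x,x_i)$. Let $\hat x_0\in\mathbb{R}^q$ be arbitrary and define recursively $$C_n=\{i\in\{1,\dots,N\}: d(\hat x_n,x_i)<1\},\qquad \hat x_{n+1}=\mu(C_n).$$ Then the sequence $(\hat x_n)$ is stationary: there exists $n_0$ such that $\hat x_n=\hat x_{n_0}$ for all $n\ge n_0$.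
   Context: This is generalized mean shift with the triangular profile $k(u)=\max(1-u,0)$, whose weight function is $g(u)=1$ if $u<1$ and $g(u)=0$ if $u\ge1$. The associated objective is $f(x)=\sum_{i=1}^N\max(1-d(x,x_i),0)=\sum_{i:\,d(x,x_i)<1}(1-d(x,x_i))$. *)

theory Defs
  imports "HOL-Analysis.Analysis"
begin

end

theory Submission
  imports Defs
begin

text \<open>The objective f never decreases along the iteration: on the current cluster C the new
point minimises \<open>\<Sum>i\<in>C. d y (x i)\<close>, so \<open>\<Sum>i\<in>C. 1 - d y (x i)\<close> does not drop, and f dominates
this sum, strictly so if a new index enters the cluster. After one step f only takes values
in the finite set \<open>f ` \<mu> ` Pow {1..N}\<close>, so the pair (f, cluster) can move upwards only finitely
often; once the cluster repeats, \<mu> of it repeats and the sequence is stuck.\<close>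

lemma iteration_constant_after_fixed_point:
  assumes iter: "\<And>n. s (Suc n) = T (s n)" and fixed: "s (Suc m) = s m"
  shows "\<forall>n\<ge>m. s n = s m"
proof (intro allI impI)
  fix n assume "m \<le> n"
  then show "s n = s m"
  proof (induction n rule: dec_induct)
    case (step n)
    then show ?case using iter[of n] iter[of m] fixed by simp
  qed simp
qed

lemma monotone_in_finite_set_with_shrinking_sets_stabilises:
  fixes F :: "nat \<Rightarrow> 'b::linorder" and C :: "nat \<Rightarrow> 'a set"
  assumes "finite V" and F_in: "\<And>n. F n \<in> V" and fin_C: "\<And>n. finite (C n)"
    and step: "\<And>n. F n < F (Suc n) \<or> F (Suc n) = F n \<and> C (Suc n) \<subseteq> C n"
  shows "\<exists>n. C (Suc n) = C n"
proof (rule ccontr)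
  assume no_repeat: "\<nexists>n. C (Suc n) = C n"
  define above where "above n = card {v \<in> V. F n < v}" for n
  let ?R = "inv_image (less_than <*lex*> less_than) (\<lambda>n. (above n, card (C n)))"
  have "(Suc n, n) \<in> ?R" for n
  proof (cases "F n < F (Suc n)")
    case True
    then have "{v \<in> V. F (Suc n) < v} \<subset> {v \<in> V. F n < v}"
      using F_in[of "Suc n"] by auto
    then have "above (Suc n) < above n"
      unfolding above_def using \<open>finite V\<close> by (simp add: psubset_card_mono)
    then show ?thesis by simp
  next
    case False
    then have "C (Suc n) \<subset> C n" and "above (Suc n) = above n"
      using step[of n] no_repeat unfolding above_def by auto
    then show ?thesis using psubset_card_mono[OF fin_C] by simp
  qed
  moreover have "wf ?R" by (intro wf_inv_image wf_lex_prod wf_less_than)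
  ultimately show False
    using wf_iff_no_infinite_down_chain[of ?R] by blast
qed

lemma sum_le_sum_max_0:
  fixes a :: "'a \<Rightarrow> real"
  assumes "finite I" "J \<subseteq> I"
  shows "(\<Sum>i\<in>J. a i) \<le> (\<Sum>i\<in>I. max (a i) 0)"
proof -
  have "(\<Sum>i\<in>J. a i) \<le> (\<Sum>i\<in>J. max (a i) 0)" by (rule sum_mono) simp
  also have "\<dots> \<le> (\<Sum>i\<in>I. max (a i) 0)"
    using assms by (intro sum_mono2) auto
  finally show ?thesis .
qed

lemma sum_less_sum_max_0:
  fixes a :: "'a \<Rightarrow> real"
  assumes "finite I" "J \<subseteq> I" "j \<in> I - J" "0 < a j"
  shows "(\<Sum>i\<in>J. a i) < (\<Sum>i\<in>I. max (a i) 0)"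
proof -
  have "finite J" using assms finite_subset by blast
  then have "(\<Sum>i\<in>J. a i) < (\<Sum>i\<in>insert j J. a i)"
    using assms by simp
  also have "\<dots> \<le> (\<Sum>i\<in>I. max (a i) 0)"
    using assms by (intro sum_le_sum_max_0) auto
  finally show ?thesis .
qed

lemma sum_max_0_eq_sum_positive:
  fixes a :: "'a \<Rightarrow> real"
  assumes "finite I"
  shows "(\<Sum>i\<in>I. max (a i) 0) = (\<Sum>i\<in>{i \<in> I. 0 < a i}. a i)"
proof -
  have "(\<Sum>i\<in>I. max (a i) 0) = (\<Sum>i\<in>I. if 0 < a i then a i else 0)"
    by (rule sum.cong) auto
  also have "\<dots> = (\<Sum>i\<in>{i \<in> I. 0 < a i}. a i)"
    by (rule sum.inter_filter[OF assms, symmetric])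
  finally show ?thesis .
qed

locale triangular_mean_shift =
  fixes N :: nat and x :: "nat \<Rightarrow> 'a" and d :: "'a \<Rightarrow> 'a \<Rightarrow> real" and \<mu> :: "nat set \<Rightarrow> 'a"
  assumes mu_argmin: "\<And>J y. J \<subseteq> {1..N} \<Longrightarrow>
      (\<Sum>i\<in>J. d (\<mu> J) (x i)) \<le> (\<Sum>i\<in>J. d y (x i))"
begin

definition cluster :: "'a \<Rightarrow> nat set" where
  "cluster y = {i \<in> {1..N}. d y (x i) < 1}"

definition objective :: "'a \<Rightarrow> real" where
  "objective y = (\<Sum>i\<in>{1..N}. max (1 - d y (x i)) 0)"

lemma cluster_subset: "cluster y \<subseteq> {1..N}"
  unfolding cluster_def by auto

lemma finite_cluster: "finite (cluster y)"
  using cluster_subset finite_subset by blast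

lemma objective_eq_sum_cluster: "objective y = (\<Sum>i\<in>cluster y. 1 - d y (x i))"
  unfolding objective_def cluster_def sum_max_0_eq_sum_positive[OF finite_atLeastAtMost] by simp

lemma sum_cluster_le_objective_mean_shift:
  "objective w \<le> (\<Sum>i\<in>cluster w. 1 - d (\<mu> (cluster w)) (x i))"
  using mu_argmin[OF cluster_subset, of w w]
  by (simp add: objective_eq_sum_cluster sum_subtractf)

lemma mean_shift_ascent:
  fixes w :: 'a
  defines "y \<equiv> \<mu> (cluster w)"
  shows "objective w < objective y \<or> objective y = objective w \<and> cluster y \<subseteq> cluster w"
proof (cases "cluster y \<subseteq> cluster w")
  case True
  have "objective w \<le> objective y"
    using sum_cluster_le_objective_mean_shift[of w]
      sum_le_sum_max_0[OF _ cluster_subset, of "\<lambda>i. 1 - d y (x i)" w]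
    unfolding y_def objective_def by simp
  with True show ?thesis by auto
next
  case False
  then obtain j where "j \<in> cluster y - cluster w" by blast
  then have "(\<Sum>i\<in>cluster w. 1 - d y (x i)) < objective y"
    unfolding objective_def
    by (intro sum_less_sum_max_0[OF _ cluster_subset]) (auto simp: cluster_def)
  then show ?thesis
    using sum_cluster_le_objective_mean_shift[of w] unfolding y_def by simp
qed

lemma mean_shift_iteration_stationary:
  assumes iter: "\<And>n. s (Suc n) = \<mu> (cluster (s n))"
  shows "\<exists>n0. \<forall>n\<ge>n0. s n = s n0"
proof -
  have "\<exists>n. cluster (s (Suc (Suc n))) = cluster (s (Suc n))"
  proof (rule monotone_in_finite_set_with_shrinking_sets_stabilises
      [where F = "\<lambda>n. objective (s (Suc n))" and V = "objective ` \<mu> ` Pow {1..N}"])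
    show "objective (s (Suc n)) \<in> objective ` \<mu> ` Pow {1..N}" for n
      using iter[of n] cluster_subset by blast
    show "objective (s (Suc n)) < objective (s (Suc (Suc n))) \<or>
        objective (s (Suc (Suc n))) = objective (s (Suc n)) \<and>
        cluster (s (Suc (Suc n))) \<subseteq> cluster (s (Suc n))" for n
      using mean_shift_ascent iter[of "Suc n"] by simp
  qed (auto simp: finite_cluster)
  then obtain m where "s (Suc (Suc (Suc m))) = s (Suc (Suc m))"
    using iter by metis
  then show ?thesis
    using iteration_constant_after_fixed_point[where T = "\<lambda>y. \<mu> (cluster y)"] iter by blast
qed

end

theorem theorem1:
  fixes N :: nat
    and x :: "nat \<Rightarrow> real ^ 'q"
    and d :: "real ^ 'q \<Rightarrow> real ^ 'q \<Rightarrow> real"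
    and \<mu> :: "nat set \<Rightarrow> real ^ 'q"
    and xh :: "nat \<Rightarrow> real ^ 'q"
  assumes d_nonneg: "\<And>y z. d y z \<ge> 0"
    and attains: "\<And>J. J \<subseteq> {1..N} \<Longrightarrow>
        \<exists>m. \<forall>y. (\<Sum>i\<in>J. d m (x i)) \<le> (\<Sum>i\<in>J. d y (x i))"
    and mu_argmin: "\<And>J y. J \<subseteq> {1..N} \<Longrightarrow>
        (\<Sum>i\<in>J. d (\<mu> J) (x i)) \<le> (\<Sum>i\<in>J. d y (x i))"
    and step: "\<And>n. xh (Suc n) = \<mu> {i \<in> {1..N}. d (xh n) (x i) < 1}"
  shows "\<exists>n0. \<forall>n\<ge>n0. xh n = xh n0"
proof -
  interpret triangular_mean_shift N x d \<mu>
    using mu_argmin by unfold_locales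
  show ?thesis
    using mean_shift_iteration_stationary step unfolding cluster_def by blast
qed

end
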